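(* Let $P$ be a program and let $\tau = \alpha \cdot \mathit{issue}(p,t) \cdot \beta \cdot \mathit{com}(p,t) \cdot \gamma$ be a minimal anomaly of $P$ such that $\mathit{issue}(p,t)$ happens before $\mathit{com}(p,t)$ through $\beta$. Then $\tau' = \alpha \cdot \mathit{issue}(p,t) \cdot \beta \cdot \mathit{com}(p,t)$ is also a minimal anomaly of $P$.
   Context: Programs: parallel compositions of processes, each a sequence of transactions (reads of shared variables into registers, writes of register expressions to shared variables, assume statements, delimited by begin and commit). Snapshot isolation (SI): a transaction reads/writes a local snapshot of the central memory taken at its begin and can commit (publishing its writes) only if no transaction committed after its begin wrote a variable it writes. Serializability: every transaction executes atomically. Traces: each transaction $t$ of process $p$ yields an issue event $\mathit{issue}(p,t)$ (begin, reads, local writes) and a commit event $\mathit{com}(p,t)$. Dependencies: $\mathsf{po}$ (program order), $\mathsf{rf}$ (write-read), $\mathsf{st}$ (store order between writes to the same variable), $\mathsf{cf}$ (conflict: a read does not see a write to the same variable that would affect it if visible), and issue-to-commit of the same transaction; $\mathsf{hb}^1$ is their union, $\mathsf{hb}$ its transitive closure. An anomaly of $P$ is a trace of an SI execution of $P$ that is not a trace of any serializable execution of $P$. "$a$ happens before $b$ through $\beta$" (in a trace $\alpha\cdot a\cdot\beta\cdot b\cdot\gamma$) means there is a nonempty subsequence $c_1\cdots c_n$ of $\beta$ with $c_i\to_{\mathsf{hb}^1}c_{i+1}$ for all $i\in[0,n]$, $c_0=a$, $c_{n+1}=b$. A transaction $t$ is delayed in a trace $\tau=\alpha\cdot\mathit{issue}(p,t)\cdot\beta\cdot\mathit{com}(p,t)\cdot\gamma$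 if $\mathit{issue}(p,t)$ happens before $\mathit{com}(p,t)$ through $\beta$. $\#(\tau)$ is the number of delayed transactions in $\tau$, and an anomaly is minimal if it has the least number of delayed transactions among all anomalies of $P$. *)

theory Defs
  imports Main
begin

text \<open>Shared variables 'v, registers 'r, values 'd. Register expressions and
assume conditions are given semantically as functions of the register valuation.\<close>

datatype ('v, 'r, 'd) instr =
    Read 'r 'v
  | Write 'v "('r \<Rightarrow> 'd) \<Rightarrow> 'd"
  | Assume "('r \<Rightarrow> 'd) \<Rightarrow> bool"

type_synonym ('v, 'r, 'd) txn = "('v, 'r, 'd) instr list"

text \<open>A program: a list of processes, each a list of transactions.
Process p is index p, transaction t of p is index t in its list.\<close>
type_synonym ('v, 'r, 'd) program = "('v, 'r, 'd) txn list list"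

abbreviation txn_of :: "('v, 'r, 'd) program \<Rightarrow> nat \<Rightarrow> nat \<Rightarrow> ('v, 'r, 'd) txn" where
  "txn_of P p t \<equiv> P ! p ! t"

datatype event = Issue nat nat | Com nat nat

fun exec_txn :: "('v \<Rightarrow> 'd) \<Rightarrow> ('v, 'r, 'd) txn \<Rightarrow> ('r \<Rightarrow> 'd) \<Rightarrow> ('v \<Rightarrow> 'd option)
                 \<Rightarrow> (('r \<Rightarrow> 'd) \<times> ('v \<Rightarrow> 'd option)) option" where
  "exec_txn m [] \<rho> w = Some (\<rho>, w)"
| "exec_txn m (Read r x # is) \<rho> w =
     exec_txn m is (\<rho>(r := (case w x of Some d \<Rightarrow> d | None \<Rightarrow> m x))) w"
| "exec_txn m (Write x f # is) \<rho> w = exec_txn m is \<rho> (w(x \<mapsto> f \<rho>))"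
| "exec_txn m (Assume g # is) \<rho> w = (if g \<rho> then exec_txn m is \<rho> w else None)"

text \<open>Variables read from the snapshot (i.e. not after a local write to them).\<close>
fun ext_reads_from :: "'v set \<Rightarrow> ('v, 'r, 'd) txn \<Rightarrow> 'v set" where
  "ext_reads_from W [] = {}"
| "ext_reads_from W (Read r x # is) = (if x \<in> W then {} else {x}) \<union> ext_reads_from W is"
| "ext_reads_from W (Write x f # is) = ext_reads_from (insert x W) is"
| "ext_reads_from W (Assume g # is) = ext_reads_from W is"

definition ext_reads :: "('v, 'r, 'd) txn \<Rightarrow> 'v set" where
  "ext_reads T = ext_reads_from {} T"

definition wset :: "('v, 'r, 'd) txn \<Rightarrow> 'v set" where
  "wset T = {x. \<exists>f. Write x f \<in> set T}"

record ('v, 'r, 'd) cfg =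
  mem  :: "'v \<Rightarrow> 'd"
  regs :: "nat \<Rightarrow> 'r \<Rightarrow> 'd"
  nxt  :: "nat \<Rightarrow> nat"
  pend :: "nat \<Rightarrow> ('v \<Rightarrow> 'd option) option"

definition init_cfg :: "('v, 'r, 'd::zero) cfg" where
  "init_cfg = \<lparr> mem = (\<lambda>_. 0), regs = (\<lambda>_ _. 0), nxt = (\<lambda>_. 0), pend = (\<lambda>_. None) \<rparr>"

definition no_conflict :: "('v, 'r, 'd) program \<Rightarrow> event list \<Rightarrow> nat \<Rightarrow> nat \<Rightarrow> bool" where
  "no_conflict P h p t \<longleftrightarrow>
     (\<forall>i k p' t'. i < k \<and> k < length h \<and> h ! i = Issue p t \<and> h ! k = Com p' t'
        \<longrightarrow> wset (txn_of P p' t') \<inter> wset (txn_of P p t) = {})"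

fun si_step :: "('v, 'r, 'd) program \<Rightarrow> event list \<Rightarrow> ('v, 'r, 'd) cfg \<Rightarrow> event
                \<Rightarrow> ('v, 'r, 'd) cfg option" where
  "si_step P h c (Issue p t) =
     (if p < length P \<and> t < length (P ! p) \<and> nxt c p = t \<and> pend c p = None then
        (case exec_txn (mem c) (txn_of P p t) (regs c p) Map.empty of
           None \<Rightarrow> None
         | Some (\<rho>, w) \<Rightarrow> Some (c\<lparr> regs := (regs c)(p := \<rho>), pend := (pend c)(p := Some w) \<rparr>))
      else None)"
| "si_step P h c (Com p t) =
     (case pend c p of
        None \<Rightarrow> None
      | Some w \<Rightarrow>
          (if nxt c p = t \<and> no_conflict P h p t then
             Some (c\<lparr> mem := (\<lambda>x. case w x of Some d \<Rightarrow> d | None \<Rightarrow> mem c x),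
                      pend := (pend c)(p := None), nxt := (nxt c)(p := Suc t) \<rparr>)
           else None))"

text \<open>Run over the reversed event list (head = last event).\<close>
fun run_rev :: "('v, 'r, 'd::zero) program \<Rightarrow> event list \<Rightarrow> ('v, 'r, 'd) cfg option" where
  "run_rev P [] = Some init_cfg"
| "run_rev P (e # r) =
     (case run_rev P r of None \<Rightarrow> None | Some c \<Rightarrow> si_step P (rev r) c e)"

definition si_exec :: "('v, 'r, 'd::zero) program \<Rightarrow> event list \<Rightarrow> bool" where
  "si_exec P \<tau> \<longleftrightarrow> run_rev P (rev \<tau>) \<noteq> None"

text \<open>Serializable execution: every (committed) transaction executes atomically,
i.e. its commit immediately follows its issue.\<close>
definition ser_exec :: "('v, 'r, 'd::zero) program \<Rightarrow> event list \<Rightarrow> bool" where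
  "ser_exec P \<sigma> \<longleftrightarrow> si_exec P \<sigma> \<and>
     (\<forall>k p t. k < length \<sigma> \<and> \<sigma> ! k = Com p t \<longrightarrow> 0 < k \<and> \<sigma> ! (k - 1) = Issue p t)"

definition at :: "event list \<Rightarrow> nat \<Rightarrow> event \<Rightarrow> bool" where
  "at \<tau> k e \<longleftrightarrow> k < length \<tau> \<and> \<tau> ! k = e"

definition po :: "('v, 'r, 'd) program \<Rightarrow> event list \<Rightarrow> event \<Rightarrow> event \<Rightarrow> bool" where
  "po P \<tau> e1 e2 \<longleftrightarrow> (\<exists>p t t'. e1 = Issue p t \<and> e2 = Issue p t' \<and> t < t'
                         \<and> e1 \<in> set \<tau> \<and> e2 \<in> set \<tau>)"

definition rf :: "('v, 'r, 'd) program \<Rightarrow> event list \<Rightarrow> event \<Rightarrow> event \<Rightarrow> bool" where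
  "rf P \<tau> e1 e2 \<longleftrightarrow> (\<exists>p' t' p t x k i. e1 = Com p' t' \<and> e2 = Issue p t \<and>
       at \<tau> k e1 \<and> at \<tau> i e2 \<and> k < i \<and>
       x \<in> ext_reads (txn_of P p t) \<and> x \<in> wset (txn_of P p' t') \<and>
       (\<forall>k' p'' t''. k < k' \<and> k' < i \<and> at \<tau> k' (Com p'' t'')
           \<longrightarrow> x \<notin> wset (txn_of P p'' t'')))"

definition st :: "('v, 'r, 'd) program \<Rightarrow> event list \<Rightarrow> event \<Rightarrow> event \<Rightarrow> bool" where
  "st P \<tau> e1 e2 \<longleftrightarrow> (\<exists>p t p' t' k k'. e1 = Com p t \<and> e2 = Com p' t' \<and>
       at \<tau> k e1 \<and> at \<tau> k' e2 \<and> k < k' \<and>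
       wset (txn_of P p t) \<inter> wset (txn_of P p' t') \<noteq> {})"

text \<open>conflict: (p,t) reads x from its snapshot and another transaction (p',t')
writing x commits after the issue of (p,t), so its write is not visible to the read.\<close>
definition cf :: "('v, 'r, 'd) program \<Rightarrow> event list \<Rightarrow> event \<Rightarrow> event \<Rightarrow> bool" where
  "cf P \<tau> e1 e2 \<longleftrightarrow> (\<exists>p t p' t' i k. e1 = Issue p t \<and> e2 = Com p' t' \<and> (p, t) \<noteq> (p', t') \<and>
       at \<tau> i e1 \<and> at \<tau> k e2 \<and> i < k \<and>
       ext_reads (txn_of P p t) \<inter> wset (txn_of P p' t') \<noteq> {})"

definition it :: "event list \<Rightarrow> event \<Rightarrow> event \<Rightarrow> bool" where
  "it \<tau> e1 e2 \<longleftrightarrow> (\<exists>p t. e1 = Issue p t \<and> e2 = Com p t \<and> e1 \<in> set \<tau> \<and> e2 \<in> set \<tau>)"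

definition hb1 :: "('v, 'r, 'd) program \<Rightarrow> event list \<Rightarrow> event \<Rightarrow> event \<Rightarrow> bool" where
  "hb1 P \<tau> e1 e2 \<longleftrightarrow> po P \<tau> e1 e2 \<or> rf P \<tau> e1 e2 \<or> st P \<tau> e1 e2 \<or> cf P \<tau> e1 e2 \<or> it \<tau> e1 e2"

definition trace_of :: "('v, 'r, 'd) program \<Rightarrow> event list
    \<Rightarrow> event set \<times> (event \<times> event) set \<times> (event \<times> event) set \<times> (event \<times> event) set \<times> (event \<times> event) set" where
  "trace_of P \<tau> = (set \<tau>, {(a, b). po P \<tau> a b}, {(a, b). rf P \<tau> a b},
                    {(a, b). st P \<tau> a b}, {(a, b). cf P \<tau> a b})"

definition anomaly :: "('v, 'r, 'd::zero) program \<Rightarrow> event list \<Rightarrow> bool" where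
  "anomaly P \<tau> \<longleftrightarrow> si_exec P \<tau> \<and> \<not> (\<exists>\<sigma>. ser_exec P \<sigma> \<and> trace_of P \<sigma> = trace_of P \<tau>)"

definition hb_through :: "('v, 'r, 'd) program \<Rightarrow> event list \<Rightarrow> nat \<Rightarrow> nat \<Rightarrow> bool" where
  "hb_through P \<tau> i j \<longleftrightarrow> j < length \<tau> \<and> (\<exists>ks. ks \<noteq> [] \<and> sorted_wrt (<) ks \<and>
     (\<forall>k \<in> set ks. i < k \<and> k < j) \<and>
     (let cs = i # ks @ [j] in
        \<forall>m. Suc m < length cs \<longrightarrow> hb1 P \<tau> (\<tau> ! (cs ! m)) (\<tau> ! (cs ! Suc m))))"

definition delayed :: "('v, 'r, 'd) program \<Rightarrow> event list \<Rightarrow> nat \<Rightarrow> nat \<Rightarrow> bool" where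
  "delayed P \<tau> p t \<longleftrightarrow> (\<exists>\<alpha> \<beta> \<gamma>. \<tau> = \<alpha> @ [Issue p t] @ \<beta> @ [Com p t] @ \<gamma> \<and>
       hb_through P \<tau> (length \<alpha>) (Suc (length \<alpha> + length \<beta>)))"

definition num_delayed :: "('v, 'r, 'd) program \<Rightarrow> event list \<Rightarrow> nat" where
  "num_delayed P \<tau> = card {(p, t). delayed P \<tau> p t}"

definition minimal_anomaly :: "('v, 'r, 'd::zero) program \<Rightarrow> event list \<Rightarrow> bool" where
  "minimal_anomaly P \<tau> \<longleftrightarrow> anomaly P \<tau> \<and> (\<forall>\<sigma>. anomaly P \<sigma> \<longrightarrow> num_delayed P \<tau> \<le> num_delayed P \<sigma>)"

end

theory Submission
  imports Defs
begin

text \<open>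
  A prefix of an SI execution is again an SI execution, and a transaction that is delayed in a
  prefix stays delayed in every extension, so \<open>\<tau>'\<close> is an SI execution with
  \<open>#(\<tau>') \<le> #(\<tau>)\<close>. The \<open>hb\<^sup>1\<close>-chain that delays \<open>(p,t)\<close> lies inside \<open>\<tau>'\<close>, so some event \<open>e\<close>
  of \<open>\<tau>'\<close> satisfies \<open>issue(p,t) hb e hb com(p,t)\<close>, a property of the trace alone. In every SI
  execution all \<open>hb\<^sup>1\<close>-edges point forward (program order and issue-before-commit are
  invariants of the semantics), so in a serializable execution with the same trace \<open>e\<close> would
  have to occur strictly between \<open>issue(p,t)\<close> and the commit immediately following it.
  Hence \<open>\<tau>'\<close> is an anomaly, and by minimality of \<open>\<tau>\<close> a minimal one.
\<close>

definition cfg_tracks :: "event list \<Rightarrow> ('v, 'r, 'd) cfg \<Rightarrow> bool" where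
  "cfg_tracks h c \<longleftrightarrow>
     (\<forall>q s. Issue q s \<in> set h \<longleftrightarrow> s < nxt c q \<or> (s = nxt c q \<and> pend c q \<noteq> None)) \<and>
     (\<forall>q s. Com q s \<in> set h \<longleftrightarrow> s < nxt c q)"

definition precedes :: "event list \<Rightarrow> event \<Rightarrow> event \<Rightarrow> bool" where
  "precedes h e1 e2 \<longleftrightarrow> (\<exists>a b. a < b \<and> at h a e1 \<and> at h b e2)"

definition wf_history :: "event list \<Rightarrow> bool" where
  "wf_history h \<longleftrightarrow> distinct h \<and>
     (\<forall>q s s'. s < s' \<longrightarrow> Issue q s \<in> set h \<longrightarrow> Issue q s' \<in> set h
        \<longrightarrow> precedes h (Issue q s) (Issue q s')) \<and>
     (\<forall>q s. Issue q s \<in> set h \<longrightarrow> Com q s \<in> set h \<longrightarrow> precedes h (Issue q s) (Com q s))"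

lemma at_unique: "distinct h \<Longrightarrow> at h a e \<Longrightarrow> at h b e \<Longrightarrow> a = b"
  unfolding at_def by (metis nth_eq_iff_index_eq)

lemma in_set_conv_at: "e \<in> set h \<longleftrightarrow> (\<exists>a. at h a e)"
  unfolding at_def by (metis in_set_conv_nth)

lemma at_append: "at xs k e \<Longrightarrow> at (xs @ ys) k e"
  by (auto simp: at_def nth_append)

lemma at_appendD: "at (xs @ ys) k e \<Longrightarrow> k < length xs \<Longrightarrow> at xs k e"
  by (auto simp: at_def nth_append)

lemma at_append_distinctD:
  assumes "distinct (xs @ ys)" "e \<in> set xs" "at (xs @ ys) k e"
  shows "at xs k e"
proof -
  obtain k' where "at xs k' e" using assms(2) by (auto simp: in_set_conv_at)
  moreover then have "k = k'" using assms(1,3) at_append at_unique by blast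
  ultimately show ?thesis by simp
qed

lemma precedes_snoc:
  "precedes (h @ [e]) e1 e2 \<longleftrightarrow> precedes h e1 e2 \<or> (e1 \<in> set h \<and> e2 = e)"
proof
  assume "precedes (h @ [e]) e1 e2"
  then obtain a b where ab: "a < b" "at (h @ [e]) a e1" "at (h @ [e]) b e2"
    unfolding precedes_def by blast
  show "precedes h e1 e2 \<or> (e1 \<in> set h \<and> e2 = e)"
  proof (cases "b < length h")
    case True
    then have "at h a e1" "at h b e2" using ab at_appendD by simp_all
    then show ?thesis using ab(1) unfolding precedes_def by blast
  next
    case False
    with ab have "b = length h" "a < length h" by (simp_all add: at_def)
    with ab have "e1 = h ! a" "e2 = e" by (simp_all add: at_def nth_append)
    then show ?thesis using \<open>a < length h\<close> by simp
  qed
next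
  assume "precedes h e1 e2 \<or> (e1 \<in> set h \<and> e2 = e)"
  then show "precedes (h @ [e]) e1 e2"
  proof
    assume "precedes h e1 e2"
    then show ?thesis unfolding precedes_def using at_append by blast
  next
    assume "e1 \<in> set h \<and> e2 = e"
    then obtain a where "at h a e1" "e2 = e" by (auto simp: in_set_conv_at)
    then have "a < length h" "at (h @ [e]) a e1" "at (h @ [e]) (length h) e2"
      by (simp_all add: at_def nth_append)
    then show ?thesis unfolding precedes_def by blast
  qed
qed

lemma precedes_trans:
  "distinct h \<Longrightarrow> precedes h x y \<Longrightarrow> precedes h y z \<Longrightarrow> precedes h x z"
  unfolding precedes_def by (metis at_unique order.strict_trans)

lemma si_step_IssueD:
  assumes "si_step P h c0 (Issue q s) = Some c"
  shows "nxt c0 q = s" "pend c0 q = None" "nxt c = nxt c0" "pend c q \<noteq> None"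
    "\<And>q'. q' \<noteq> q \<Longrightarrow> pend c q' = pend c0 q'"
  using assms by (auto split: if_splits option.splits)

lemma si_step_ComD:
  assumes "si_step P h c0 (Com q s) = Some c"
  shows "nxt c0 q = s" "pend c0 q \<noteq> None" "nxt c = (nxt c0)(q := Suc s)"
    "pend c = (pend c0)(q := None)"
  using assms by (auto split: if_splits option.splits)

lemma cfg_tracks_step:
  assumes "cfg_tracks h c0" "si_step P h c0 e = Some c"
  shows "cfg_tracks (h @ [e]) c"
proof (cases e)
  case (Issue q s)
  note step = si_step_IssueD[OF assms(2)[unfolded Issue]]
  show ?thesis using assms(1) step unfolding Issue cfg_tracks_def
    by (auto simp: step(3)) (metis step(5))+
next
  case (Com q s)
  note step = si_step_ComD[OF assms(2)[unfolded Com]]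
  show ?thesis using assms(1) step unfolding Com cfg_tracks_def
    by (auto simp: step(3,4) less_Suc_eq)
qed

lemma wf_history_snoc_Issue:
  assumes wf: "wf_history h" and fresh: "Issue q s \<notin> set h" "Com q s \<notin> set h"
    and later: "\<And>s'. Issue q s' \<in> set h \<Longrightarrow> s' < s"
  shows "wf_history (h @ [Issue q s])"
  unfolding wf_history_def
proof (intro conjI allI impI)
  show "distinct (h @ [Issue q s])" using wf fresh by (simp add: wf_history_def)
next
  fix q' s1 s2
  assume "s1 < s2" "Issue q' s1 \<in> set (h @ [Issue q s])" "Issue q' s2 \<in> set (h @ [Issue q s])"
  then show "precedes (h @ [Issue q s]) (Issue q' s1) (Issue q' s2)"
    using wf later[of s2] unfolding wf_history_def precedes_snoc by auto
next
  fix q' s'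
  assume "Issue q' s' \<in> set (h @ [Issue q s])" "Com q' s' \<in> set (h @ [Issue q s])"
  then show "precedes (h @ [Issue q s]) (Issue q' s') (Com q' s')"
    using wf fresh unfolding wf_history_def precedes_snoc by auto
qed

lemma wf_history_snoc_Com:
  assumes "wf_history h" "Com q s \<notin> set h"
  shows "wf_history (h @ [Com q s])"
  using assms unfolding wf_history_def by (auto simp: precedes_snoc)

lemma wf_history_step:
  assumes "cfg_tracks h c0" "wf_history h" "si_step P h c0 e = Some c"
  shows "wf_history (h @ [e])"
proof (cases e)
  case (Issue q s)
  note step = si_step_IssueD[OF assms(3)[unfolded Issue]]
  show ?thesis unfolding Issue
    by (rule wf_history_snoc_Issue) (use assms(1,2) step in \<open>auto simp: cfg_tracks_def\<close>)
next
  case (Com q s)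
  note step = si_step_ComD[OF assms(3)[unfolded Com]]
  show ?thesis unfolding Com
    by (rule wf_history_snoc_Com) (use assms(1,2) step in \<open>auto simp: cfg_tracks_def\<close>)
qed

lemma run_rev_invariants:
  "run_rev P (rev h) = Some c \<Longrightarrow> cfg_tracks h c \<and> wf_history h"
proof (induction h arbitrary: c rule: rev_induct)
  case Nil
  then show ?case by (auto simp: cfg_tracks_def wf_history_def init_cfg_def)
next
  case (snoc e h)
  then obtain c0 where "run_rev P (rev h) = Some c0" "si_step P h c0 e = Some c"
    by (auto split: option.splits)
  with snoc.IH show ?case using cfg_tracks_step wf_history_step by blast
qed

lemma si_exec_wf_history: "si_exec P h \<Longrightarrow> wf_history h"
  unfolding si_exec_def using run_rev_invariants by blast

lemma si_exec_distinct: "si_exec P h \<Longrightarrow> distinct h"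
  using si_exec_wf_history wf_history_def by blast

lemma si_exec_prefix: "si_exec P (xs @ ys) \<Longrightarrow> si_exec P xs"
proof -
  have "run_rev P (zs @ rs) \<noteq> None \<Longrightarrow> run_rev P rs \<noteq> None" for zs rs
    by (induction zs) (auto split: option.splits)
  then show "si_exec P (xs @ ys) \<Longrightarrow> si_exec P xs"
    unfolding si_exec_def by (metis rev_append)
qed

lemma hb1_append:
  assumes "hb1 P xs e1 e2"
  shows "hb1 P (xs @ ys) e1 e2"
proof -
  have "rf P (xs @ ys) e1 e2" if rf_xs: "rf P xs e1 e2"
  proof -
    obtain p' t' p t x k i where rf: "e1 = Com p' t'" "e2 = Issue p t" "at xs k e1" "at xs i e2"
      "k < i" "x \<in> ext_reads (txn_of P p t)" "x \<in> wset (txn_of P p' t')"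
      and unwritten: "\<forall>k' p'' t''. k < k' \<and> k' < i \<and> at xs k' (Com p'' t'')
           \<longrightarrow> x \<notin> wset (txn_of P p'' t'')"
      using rf_xs unfolding rf_def by blast
    have "i < length xs" using rf(4) by (simp add: at_def)
    then have "\<forall>k' p'' t''. k < k' \<and> k' < i \<and> at (xs @ ys) k' (Com p'' t'')
           \<longrightarrow> x \<notin> wset (txn_of P p'' t'')"
      using unwritten at_appendD by (meson order.strict_trans)
    then show ?thesis unfolding rf_def using rf at_append by blast
  qed
  moreover have "po P (xs @ ys) e1 e2" if "po P xs e1 e2" using that by (auto simp: po_def)
  moreover have "st P (xs @ ys) e1 e2" if "st P xs e1 e2"
    using that unfolding st_def by (metis at_append)
  moreover have "cf P (xs @ ys) e1 e2" if "cf P xs e1 e2"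
    using that unfolding cf_def by (metis at_append)
  moreover have "it (xs @ ys) e1 e2" if "it xs e1 e2" using that by (auto simp: it_def)
  ultimately show ?thesis using assms unfolding hb1_def by blast
qed

lemma hb1_prefix:
  assumes "distinct (xs @ ys)" "e1 \<in> set xs" "e2 \<in> set xs" "hb1 P (xs @ ys) e1 e2"
  shows "hb1 P xs e1 e2"
proof -
  have at1: "at xs k e1" if "at (xs @ ys) k e1" for k
    using at_append_distinctD[OF assms(1,2) that] .
  have at2: "at xs k e2" if "at (xs @ ys) k e2" for k
    using at_append_distinctD[OF assms(1,3) that] .
  have "rf P xs e1 e2" if rf_xsys: "rf P (xs @ ys) e1 e2"
  proof -
    obtain p' t' p t x k i where rf: "e1 = Com p' t'" "e2 = Issue p t"
      "at (xs @ ys) k e1" "at (xs @ ys) i e2"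
      "k < i" "x \<in> ext_reads (txn_of P p t)" "x \<in> wset (txn_of P p' t')"
      and unwritten: "\<forall>k' p'' t''. k < k' \<and> k' < i \<and> at (xs @ ys) k' (Com p'' t'')
           \<longrightarrow> x \<notin> wset (txn_of P p'' t'')"
      using rf_xsys unfolding rf_def by blast
    have "\<forall>k' p'' t''. k < k' \<and> k' < i \<and> at xs k' (Com p'' t'')
           \<longrightarrow> x \<notin> wset (txn_of P p'' t'')"
      using unwritten at_append by blast
    then show ?thesis unfolding rf_def using rf at1 at2 by blast
  qed
  moreover have "st P xs e1 e2" if "st P (xs @ ys) e1 e2"
    using that at1 at2 unfolding st_def by blast
  moreover have "cf P xs e1 e2" if "cf P (xs @ ys) e1 e2"
    using that at1 at2 unfolding cf_def by blast
  moreover have "po P xs e1 e2" if "po P (xs @ ys) e1 e2"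
    using that assms(2,3) by (auto simp: po_def)
  moreover have "it xs e1 e2" if "it (xs @ ys) e1 e2"
    using that assms(2,3) by (auto simp: it_def)
  ultimately show ?thesis using assms(4) unfolding hb1_def by blast
qed

lemma hb1_precedes:
  assumes "si_exec P h" "hb1 P h e1 e2"
  shows "precedes h e1 e2"
proof -
  have wf: "wf_history h" using assms(1) by (rule si_exec_wf_history)
  have "precedes h e1 e2" if "po P h e1 e2 \<or> it h e1 e2"
    using that wf unfolding po_def it_def wf_history_def by blast
  moreover have "precedes h e1 e2" if "rf P h e1 e2 \<or> st P h e1 e2 \<or> cf P h e1 e2"
    using that unfolding precedes_def rf_def st_def cf_def by blast
  ultimately show ?thesis using assms(2) unfolding hb1_def by blast
qed

lemma hb1_eq_if_trace_eq:
  assumes "trace_of P \<sigma> = trace_of P \<tau>"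
  shows "hb1 P \<sigma> = hb1 P \<tau>"
proof -
  have pred_eq: "R = S" if "{(x, y). R x y} = {(x, y). S x y}" for R S :: "event \<Rightarrow> event \<Rightarrow> bool"
    using that by (simp add: fun_eq_iff set_eq_iff)
  have "set \<sigma> = set \<tau>" "po P \<sigma> = po P \<tau>" "rf P \<sigma> = rf P \<tau>" "st P \<sigma> = st P \<tau>" "cf P \<sigma> = cf P \<tau>"
    using assms unfolding trace_of_def by (auto intro: pred_eq)
  then show ?thesis unfolding hb1_def it_def by simp
qed

lemma tranclp_hb1_precedes:
  assumes "si_exec P h" "(hb1 P h)\<^sup>+\<^sup>+ e1 e2"
  shows "precedes h e1 e2"
  using assms(2)
proof induction
  case (step y z)
  then show ?case
    using precedes_trans[OF si_exec_distinct[OF assms(1)]] hb1_precedes[OF assms(1)] by blast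
qed (use hb1_precedes[OF assms(1)] in blast)

lemma ser_exec_nothing_between:
  assumes ser: "ser_exec P \<sigma>"
    and before: "precedes \<sigma> (Issue p t) e" and after: "precedes \<sigma> e (Com p t)"
  shows False
proof -
  have dist: "distinct \<sigma>"
    using ser unfolding ser_exec_def by (blast dest: si_exec_distinct)
  obtain a c where "at \<sigma> a (Issue p t)" "a < c" "at \<sigma> c e" using before precedes_def by blast
  moreover obtain c' b where "at \<sigma> c' e" "c' < b" "at \<sigma> b (Com p t)" using after precedes_def by blast
  moreover from \<open>at \<sigma> b (Com p t)\<close> have "at \<sigma> (b - 1) (Issue p t)" "0 < b"
    using ser unfolding ser_exec_def at_def by auto
  ultimately show False using at_unique[OF dist] by (metis One_nat_def Suc_pred not_less_eq)
qed

lemma anomaly_if_hb_between: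
  assumes "si_exec P \<tau>"
    and "(hb1 P \<tau>)\<^sup>+\<^sup>+ (Issue p t) e" "(hb1 P \<tau>)\<^sup>+\<^sup>+ e (Com p t)"
  shows "anomaly P \<tau>"
  unfolding anomaly_def
proof (intro conjI notI)
  show "si_exec P \<tau>" by fact
next
  assume "\<exists>\<sigma>. ser_exec P \<sigma> \<and> trace_of P \<sigma> = trace_of P \<tau>"
  then obtain \<sigma> where ser: "ser_exec P \<sigma>" and hb: "hb1 P \<sigma> = hb1 P \<tau>"
    using hb1_eq_if_trace_eq by blast
  have "si_exec P \<sigma>" using ser by (simp add: ser_exec_def)
  then have "precedes \<sigma> (Issue p t) e" "precedes \<sigma> e (Com p t)"
    using assms(2,3) tranclp_hb1_precedes unfolding hb[symmetric] by blast+
  then show False using ser ser_exec_nothing_between by blast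
qed

lemma tranclp_chain_nth:
  assumes "\<forall>m. Suc m < length cs \<longrightarrow> R (f (cs ! m)) (f (cs ! Suc m))" "a < b" "b < length cs"
  shows "R\<^sup>+\<^sup>+ (f (cs ! a)) (f (cs ! b))"
  using assms(2,3)
proof (induction b)
  case (Suc b)
  then show ?case
    using assms(1) by (cases "a = b") (auto intro: tranclp.trancl_into_trancl)
qed simp

lemma hb_through_transfer:
  assumes hb: "hb_through P \<tau> i j" and len: "j < length \<tau>'"
    and same: "\<And>k. k \<le> j \<Longrightarrow> \<tau>' ! k = \<tau> ! k"
    and hb1: "\<And>k l. k \<le> j \<Longrightarrow> l \<le> j \<Longrightarrow> hb1 P \<tau> (\<tau> ! k) (\<tau> ! l) \<Longrightarrow> hb1 P \<tau>' (\<tau> ! k) (\<tau> ! l)"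
  shows "hb_through P \<tau>' i j"
proof -
  obtain ks where ks: "ks \<noteq> []" "sorted_wrt (<) ks" "\<forall>k \<in> set ks. i < k \<and> k < j"
    and chain: "\<forall>m. Suc m < length (i # ks @ [j]) \<longrightarrow>
        hb1 P \<tau> (\<tau> ! ((i # ks @ [j]) ! m)) (\<tau> ! ((i # ks @ [j]) ! Suc m))"
    using hb unfolding hb_through_def Let_def by blast
  have bound: "(i # ks @ [j]) ! m \<le> j" if "m < length (i # ks @ [j])" for m
  proof -
    have "i < j" using ks(1,3) by (metis last_in_set order.strict_trans)
    then show ?thesis using nth_mem[OF that] ks(3) by fastforce
  qed
  have "\<forall>m. Suc m < length (i # ks @ [j]) \<longrightarrow>
        hb1 P \<tau>' (\<tau>' ! ((i # ks @ [j]) ! m)) (\<tau>' ! ((i # ks @ [j]) ! Suc m))"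
    using chain bound same hb1 by (metis Suc_lessD)
  then show ?thesis unfolding hb_through_def Let_def using len ks by blast
qed

lemma hb_through_append:
  assumes "hb_through P xs i j"
  shows "hb_through P (xs @ ys) i j"
proof -
  have "j < length xs" using assms by (simp add: hb_through_def)
  then show ?thesis
    by (intro hb_through_transfer[OF assms]) (auto simp: nth_append intro: hb1_append)
qed

lemma hb_through_prefix:
  assumes hb: "hb_through P (xs @ ys) i j" and dist: "distinct (xs @ ys)" and len: "j < length xs"
  shows "hb_through P xs i j"
proof (rule hb_through_transfer[OF hb len])
  have nth_prefix: "(xs @ ys) ! k = xs ! k" "xs ! k \<in> set xs" if "k \<le> j" for k
    using that len by (simp_all add: nth_append)
  then show "xs ! k = (xs @ ys) ! k" if "k \<le> j" for k using that by simp
  show "hb1 P xs ((xs @ ys) ! k) ((xs @ ys) ! l)"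
    if "k \<le> j" "l \<le> j" "hb1 P (xs @ ys) ((xs @ ys) ! k) ((xs @ ys) ! l)" for k l
    using hb1_prefix[OF dist] nth_prefix that by metis
qed

lemma hb_through_between:
  assumes "hb_through P \<tau> i j"
  obtains k where "i < k" "k < j"
    "(hb1 P \<tau>)\<^sup>+\<^sup>+ (\<tau> ! i) (\<tau> ! k)" "(hb1 P \<tau>)\<^sup>+\<^sup>+ (\<tau> ! k) (\<tau> ! j)"
proof -
  obtain ks where ks: "ks \<noteq> []" "\<forall>k \<in> set ks. i < k \<and> k < j"
    and chain: "\<forall>m. Suc m < length (i # ks @ [j]) \<longrightarrow>
        hb1 P \<tau> (\<tau> ! ((i # ks @ [j]) ! m)) (\<tau> ! ((i # ks @ [j]) ! Suc m))"
    using assms unfolding hb_through_def Let_def by blast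
  let ?cs = "i # ks @ [j]"
  note path = tranclp_chain_nth[where R = "hb1 P \<tau>" and f = "(!) \<tau>", OF chain]
  have "(hb1 P \<tau>)\<^sup>+\<^sup>+ (\<tau> ! (?cs ! 0)) (\<tau> ! (?cs ! 1))"
    by (rule path) (use ks(1) in simp_all)
  moreover have "(hb1 P \<tau>)\<^sup>+\<^sup>+ (\<tau> ! (?cs ! 1)) (\<tau> ! (?cs ! Suc (length ks)))"
    by (rule path) (use ks(1) in simp_all)
  moreover have "?cs ! 1 = hd ks" "?cs ! Suc (length ks) = j"
    using ks(1) by (simp_all add: nth_append hd_conv_nth)
  moreover have "i < hd ks" "hd ks < j" using ks by simp_all
  ultimately show ?thesis using that by simp
qed

lemma delayed_append:
  assumes "delayed P xs q s"
  shows "delayed P (xs @ ys) q s"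
proof -
  obtain a b g where "xs = a @ [Issue q s] @ b @ [Com q s] @ g"
    and "hb_through P xs (length a) (Suc (length a + length b))"
    using assms unfolding delayed_def by blast
  moreover from this(2) have "hb_through P (xs @ ys) (length a) (Suc (length a + length b))"
    by (rule hb_through_append)
  ultimately show ?thesis unfolding delayed_def by (metis append.assoc)
qed

lemma finite_delayed: "finite {(q, s). delayed P \<tau> q s}"
proof (rule finite_subset)
  show "{(q, s). delayed P \<tau> q s} \<subseteq> (\<lambda>(q, s). Issue q s) -` set \<tau>"
    unfolding delayed_def by auto
  show "finite ((\<lambda>(q, s). Issue q s) -` set \<tau>)"
    by (rule finite_vimageI) (auto simp: inj_on_def)
qed

lemma num_delayed_append_mono: "num_delayed P xs \<le> num_delayed P (xs @ ys)"
  unfolding num_delayed_def by (intro card_mono finite_delayed) (auto intro: delayed_append)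

theorem lemma2:
  fixes P :: "('v, 'r, 'd::zero) program"
    and \<alpha> \<beta> \<gamma> :: "event list" and p t :: nat
  assumes "minimal_anomaly P \<tau>"
    and "\<tau> = \<alpha> @ [Issue p t] @ \<beta> @ [Com p t] @ \<gamma>"
    and "hb_through P \<tau> (length \<alpha>) (Suc (length \<alpha> + length \<beta>))"
  shows "minimal_anomaly P (\<alpha> @ [Issue p t] @ \<beta> @ [Com p t])"
proof -
  define \<tau>' where "\<tau>' = \<alpha> @ [Issue p t] @ \<beta> @ [Com p t]"
  have \<tau>: "\<tau> = \<tau>' @ \<gamma>" using assms(2) by (simp add: \<tau>'_def)
  have si: "si_exec P \<tau>" and min: "\<And>\<sigma>. anomaly P \<sigma> \<Longrightarrow> num_delayed P \<tau> \<le> num_delayed P \<sigma>"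
    using assms(1) unfolding minimal_anomaly_def anomaly_def by blast+
  have si': "si_exec P \<tau>'" using si unfolding \<tau> by (rule si_exec_prefix)
  have "hb_through P \<tau>' (length \<alpha>) (Suc (length \<alpha> + length \<beta>))"
    using assms(3) si_exec_distinct[OF si] unfolding \<tau>
    by (rule hb_through_prefix) (simp add: \<tau>'_def)
  moreover have "\<tau>' ! length \<alpha> = Issue p t" "\<tau>' ! Suc (length \<alpha> + length \<beta>) = Com p t"
    by (simp_all add: \<tau>'_def nth_append)
  ultimately obtain k where "(hb1 P \<tau>')\<^sup>+\<^sup>+ (Issue p t) (\<tau>' ! k)" "(hb1 P \<tau>')\<^sup>+\<^sup>+ (\<tau>' ! k) (Com p t)"
    by (metis hb_through_between)
  then have "anomaly P \<tau>'" by (rule anomaly_if_hb_between[OF si'])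
  moreover have "num_delayed P \<tau>' \<le> num_delayed P \<sigma>" if "anomaly P \<sigma>" for \<sigma>
    using min[OF that] num_delayed_append_mono[of P \<tau>' \<gamma>] unfolding \<tau> by linarith
  ultimately show ?thesis unfolding minimal_anomaly_def \<tau>'_def by blast
qed

end
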